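(* Let $f\colon\Sigma\to\mathbb{R}^3$ be a frontal and $p\in\Sigma$ a non-degenerate singular point. Let $\gamma=\gamma(t)$ be a singular curve with $\gamma(0)=p$, and let $\xi,\eta$ be smooth vector fields near $p$ such that along $\gamma$ one has $\xi=\gamma'$, $df(\eta)=0$ and $\det(\xi,\eta)>0$. Assume that (a) $\eta^3f(p)=\mathbf{0}$; (b) $\xi f(p)$ and $\eta^2f(p)$ are linearly independent; (c) $\xi\eta^3f(p)$ and $\eta^2f(p)$ are linearly dependent. Then there exist a regular curve $c\colon(-\varepsilon,\varepsilon)\to\Sigma$ and $\ell\in\mathbb{R}$ such that, writing $\hat c=f\circ c$: $c(0)=p$, $c'(0)$ is parallel to $\eta(p)$, $\hat c''(0)\neq\mathbf 0$, $\hat c'''(0)=\ell\,\hat c''(0)$, and \[ B:=\det\big(df(\gamma'(0)),\,\hat c''(0),\,3\hat c^{(5)}(0)-10\ell\,\hat c^{(4)}(0)\big)=3\det\big(\xi f,\eta^2f,\eta^5f\big)(p). \]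
   Context: A smooth map $f\colon U\to\mathbb{R}^3$ from a surface is a frontal if there is a smooth map $n\colon U\to S^2$ with $n$ orthogonal (for the Euclidean inner product) to $df(TU)$. A singular point is a point where $f$ is not an immersion. The signed area density is $\lambda=\det(f_u,f_v,n)$ in local coordinates $(u,v)$; a singular point $p$ is non-degenerate if $d\lambda_p\neq0$. Near a non-degenerate singular point the singular set is the image of a regular curve $\gamma$ (a singular curve). For a vector field $\eta$, $\eta^kf$ denotes the $k$-fold directional derivative $\eta\cdots\eta f$, and $\xi\eta^3f=\xi(\eta^3 f)$. *)

theory Defs
  imports "HOL-Analysis.Analysis"
begin

(* Local model: the surface Sigma is replaced by an open set U of the coordinate
   plane real \<times> real (coordinates (u,v)); R^3 is real^3. *)

fun Ck_on :: "nat \<Rightarrow> 'a::euclidean_space set \<Rightarrow> ('a \<Rightarrow> 'b::real_normed_vector) \<Rightarrow> bool" where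
  "Ck_on 0 U g = continuous_on U g"
| "Ck_on (Suc k) U g = (g differentiable_on U \<and>
      (\<forall>v. Ck_on k U (\<lambda>x. frechet_derivative g (at x) v)))"

definition C_infty_on :: "'a::euclidean_space set \<Rightarrow> ('a \<Rightarrow> 'b::real_normed_vector) \<Rightarrow> bool" where
  "C_infty_on U g \<longleftrightarrow> (\<forall>k. Ck_on k U g)"

definition det3 :: "real^3 \<Rightarrow> real^3 \<Rightarrow> real^3 \<Rightarrow> real" where
  "det3 a b c = det (vector [a, b, c] :: real^3^3)"

definition det2 :: "real \<times> real \<Rightarrow> real \<times> real \<Rightarrow> real" where
  "det2 a b = fst a * snd b - snd a * fst b"

definition vf_deriv :: "(real \<times> real \<Rightarrow> real \<times> real) \<Rightarrow> (real \<times> real \<Rightarrow> 'b::real_normed_vector)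
    \<Rightarrow> real \<times> real \<Rightarrow> 'b" where
  "vf_deriv X g = (\<lambda>x. frechet_derivative g (at x) (X x))"

definition vf_iter :: "(real \<times> real \<Rightarrow> real \<times> real) \<Rightarrow> nat \<Rightarrow> (real \<times> real \<Rightarrow> 'b::real_normed_vector)
    \<Rightarrow> real \<times> real \<Rightarrow> 'b" where
  "vf_iter X k g = (vf_deriv X ^^ k) g"

definition nderiv :: "nat \<Rightarrow> (real \<Rightarrow> 'b::real_normed_vector) \<Rightarrow> real \<Rightarrow> 'b" where
  "nderiv k g = ((\<lambda>h t. vector_derivative h (at t)) ^^ k) g"

definition lin_indep2 :: "'b::real_vector \<Rightarrow> 'b \<Rightarrow> bool" where
  "lin_indep2 a b \<longleftrightarrow> (\<forall>s t. s *\<^sub>R a + t *\<^sub>R b = 0 \<longrightarrow> s = 0 \<and> t = 0)"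

definition frontal_with :: "(real \<times> real) set \<Rightarrow> (real \<times> real \<Rightarrow> real^3) \<Rightarrow> (real \<times> real \<Rightarrow> real^3) \<Rightarrow> bool" where
  "frontal_with U f n \<longleftrightarrow> open U \<and> C_infty_on U f \<and> C_infty_on U n \<and>
     (\<forall>x\<in>U. norm (n x) = 1 \<and> (\<forall>v. n x \<bullet> frechet_derivative f (at x) v = 0))"

definition singular_pt :: "(real \<times> real \<Rightarrow> real^3) \<Rightarrow> real \<times> real \<Rightarrow> bool" where
  "singular_pt f x \<longleftrightarrow> \<not> inj (frechet_derivative f (at x))"

definition area_density :: "(real \<times> real \<Rightarrow> real^3) \<Rightarrow> (real \<times> real \<Rightarrow> real^3) \<Rightarrow> real \<times> real \<Rightarrow> real" where
  "area_density f n x = det3 (frechet_derivative f (at x) (1, 0)) (frechet_derivative f (at x) (0, 1)) (n x)"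

definition nondegenerate_singular_pt :: "(real \<times> real \<Rightarrow> real^3) \<Rightarrow> (real \<times> real \<Rightarrow> real^3) \<Rightarrow> real \<times> real \<Rightarrow> bool" where
  "nondegenerate_singular_pt f n p \<longleftrightarrow> singular_pt f p \<and>
     frechet_derivative (area_density f n) (at p) \<noteq> (\<lambda>_. 0)"

end

theory Submission
  imports Defs
begin

(*
  Take for c the integral curve of \<eta> through p. Differentiating along c is differentiating
  along \<eta>, so the j-th derivative of f \<circ> c at 0 is (\<eta>^j f)(p). Hence c'(0) = \<eta>(p), the
  second derivative (\<eta>^2 f)(p) is non-zero by (b) and the third one (\<eta>^3 f)(p) vanishes by (a),
  so l = 0 works; since df(\<gamma>'(0)) = (\<xi> f)(p), B becomes 3 det(\<xi> f, \<eta>^2 f, \<eta>^5 f)(p).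
  The integral curve comes from Picard iteration: it is the fixed point of a contraction on
  bounded continuous curves.
*)

lemma det3_scaleR_right: "det3 a b (k *\<^sub>R x) = k * det3 a b x"
  unfolding det3_def det_3 by (simp add: algebra_simps)

lemma lin_indep2_imp_nonzero_right:
  assumes "lin_indep2 a b"
  shows "b \<noteq> 0"
proof
  assume "b = 0"
  then have "0 *\<^sub>R a + 1 *\<^sub>R b = 0"
    by simp
  then have "(1::real) = 0"
    using assms unfolding lin_indep2_def by blast
  then show False
    by simp
qed

section \<open>Functions of class C^k\<close>

lemma Ck_on_SucD: "Ck_on (Suc k) S g \<Longrightarrow> Ck_on k S g"
proof (induction k arbitrary: g)
  case 0
  then show ?case by (simp add: differentiable_imp_continuous_on)
next
  case (Suc k)
  then show ?case by (metis Ck_on.simps(2))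
qed

lemma Ck_on_le: "m \<le> k \<Longrightarrow> Ck_on k S g \<Longrightarrow> Ck_on m S g"
proof (induction k rule: dec_induct)
  case (step n)
  then show ?case by (metis Ck_on_SucD)
qed

lemma Ck_on_subset: "Ck_on k U g \<Longrightarrow> V \<subseteq> U \<Longrightarrow> Ck_on k V g"
proof (induction k arbitrary: g)
  case 0
  then show ?case by (metis Ck_on.simps(1) continuous_on_subset)
next
  case (Suc k)
  then show ?case by (metis Ck_on.simps(2) differentiable_on_subset)
qed

lemma frechet_derivative_cong_open:
  assumes "open S" "x \<in> S" "\<And>y. y \<in> S \<Longrightarrow> g y = g' y"
  shows "frechet_derivative g (at x) = frechet_derivative g' (at x)"
proof -
  have "(g has_derivative D) (at x) \<longleftrightarrow> (g' has_derivative D) (at x)" for D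
    using has_derivative_transform_within_open[OF _ assms(1,2)] assms(3) by metis
  then show ?thesis unfolding frechet_derivative_def by simp
qed

lemma Ck_on_cong:
  assumes "open S" "Ck_on k S g" "\<And>x. x \<in> S \<Longrightarrow> g x = g' x"
  shows "Ck_on k S g'"
  using assms(2,3)
proof (induction k arbitrary: g g')
  case 0
  then show ?case by (metis Ck_on.simps(1) continuous_on_cong)
next
  case (Suc k)
  have "g' differentiable at x within S" if "x \<in> S" for x
  proof (rule differentiable_transform_within[OF _ zero_less_one that])
    show "g differentiable at x within S"
      using Suc.prems(1) that unfolding Ck_on.simps differentiable_on_def by blast
  qed (use Suc.prems(2) in simp)
  moreover have "Ck_on k S (\<lambda>x. frechet_derivative g' (at x) v)" for v
  proof (rule Suc.IH)
    show "Ck_on k S (\<lambda>x. frechet_derivative g (at x) v)"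
      using Suc.prems(1) by simp
    show "frechet_derivative g (at x) v = frechet_derivative g' (at x) v" if "x \<in> S" for x
      using frechet_derivative_cong_open[OF assms(1) that Suc.prems(2)] by simp
  qed
  ultimately show ?case by (simp add: differentiable_on_def)
qed

lemma Ck_on_SucI:
  assumes "open S" "g differentiable_on S"
    and "\<And>v. \<exists>D. Ck_on k S D \<and> (\<forall>x\<in>S. frechet_derivative g (at x) v = D x)"
  shows "Ck_on (Suc k) S g"
proof -
  have "Ck_on k S (\<lambda>x. frechet_derivative g (at x) v)" for v
  proof -
    obtain D where "Ck_on k S D" "\<forall>x\<in>S. frechet_derivative g (at x) v = D x"
      using assms(3) by blast
    then show ?thesis by (auto intro: Ck_on_cong[OF assms(1), of k D])
  qed
  with assms(2) show ?thesis by simp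
qed

lemma frechet_derivative_apply:
  "(g has_derivative D) (at x) \<Longrightarrow> frechet_derivative g (at x) v = D v"
  by (simp add: frechet_derivative_at[symmetric])

lemma Ck_on_const: "Ck_on k S (\<lambda>x. c)"
  by (induction k arbitrary: c) simp_all

lemma Ck_on_add:
  assumes "open S"
  shows "Ck_on k S a \<Longrightarrow> Ck_on k S b \<Longrightarrow> Ck_on k S (\<lambda>x. a x + b x)"
proof (induction k arbitrary: a b)
  case 0
  then show ?case by (simp add: continuous_on_add)
next
  case (Suc k)
  have da: "a differentiable_on S" and db: "b differentiable_on S"
    using Suc.prems by auto
  show ?case
  proof (rule Ck_on_SucI[OF assms])
    show "(\<lambda>x. a x + b x) differentiable_on S"
      using da db by (rule differentiable_on_add)
    fix v
    show "\<exists>D. Ck_on k S D \<and> (\<forall>x\<in>S. frechet_derivative (\<lambda>x. a x + b x) (at x) v = D x)"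
    proof (intro exI conjI ballI)
      show "Ck_on k S (\<lambda>x. frechet_derivative a (at x) v + frechet_derivative b (at x) v)"
        using Suc.IH Suc.prems by simp
      fix x assume "x \<in> S"
      then have "a differentiable at x" "b differentiable at x"
        using da db differentiable_on_eq_differentiable_at[OF assms] by auto
      then show "frechet_derivative (\<lambda>x. a x + b x) (at x) v
          = frechet_derivative a (at x) v + frechet_derivative b (at x) v"
        by (intro frechet_derivative_apply has_derivative_add) (auto simp: frechet_derivative_works)
    qed
  qed
qed

lemma Ck_on_sum:
  assumes "open S"
  shows "(\<And>i. i \<in> I \<Longrightarrow> Ck_on k S (g i)) \<Longrightarrow> Ck_on k S (\<lambda>x. \<Sum>i\<in>I. g i x)"
proof (induction I rule: infinite_finite_induct)
  case (insert i I)
  then show ?case by (simp add: Ck_on_add[OF assms])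
qed (simp_all add: Ck_on_const)

lemma Ck_on_scaleR:
  fixes a :: "'a::euclidean_space \<Rightarrow> real" and b :: "'a \<Rightarrow> 'b::real_normed_vector"
  assumes "open S"
  shows "Ck_on k S a \<Longrightarrow> Ck_on k S b \<Longrightarrow> Ck_on k S (\<lambda>x. a x *\<^sub>R b x)"
proof (induction k arbitrary: a b)
  case 0
  then show ?case by (simp add: continuous_on_scaleR)
next
  case (Suc k)
  have da: "a differentiable_on S" and db: "b differentiable_on S"
    using Suc.prems by auto
  have ak: "Ck_on k S a" and bk: "Ck_on k S b"
    using Suc.prems Ck_on_SucD by blast+
  show ?case
  proof (rule Ck_on_SucI[OF assms])
    show "(\<lambda>x. a x *\<^sub>R b x) differentiable_on S"
      using da db by (rule differentiable_on_scaleR)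
    fix v
    let ?D = "\<lambda>x. a x *\<^sub>R frechet_derivative b (at x) v + frechet_derivative a (at x) v *\<^sub>R b x"
    show "\<exists>D. Ck_on k S D \<and> (\<forall>x\<in>S. frechet_derivative (\<lambda>x. a x *\<^sub>R b x) (at x) v = D x)"
    proof (intro exI conjI ballI)
      show "Ck_on k S ?D"
        using Suc.IH Suc.prems ak bk by (intro Ck_on_add[OF assms]) simp_all
      fix x assume "x \<in> S"
      then have "a differentiable at x" "b differentiable at x"
        using da db differentiable_on_eq_differentiable_at[OF assms] by auto
      then show "frechet_derivative (\<lambda>x. a x *\<^sub>R b x) (at x) v = ?D x"
        by (intro frechet_derivative_apply has_derivative_scaleR) (auto simp: frechet_derivative_works)
    qed
  qed
qed

lemma Ck_on_bounded_linear:
  assumes "open S" "bounded_linear L"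
  shows "Ck_on k S g \<Longrightarrow> Ck_on k S (\<lambda>x. L (g x))"
proof (induction k arbitrary: g)
  case 0
  then show ?case
    using assms(2) by (simp add: linear_continuous_on continuous_on_compose2[of UNIV L])
next
  case (Suc k)
  have dg: "g differentiable_on S"
    using Suc.prems by auto
  show ?case
  proof (rule Ck_on_SucI[OF assms(1)])
    show "(\<lambda>x. L (g x)) differentiable_on S"
      using dg assms(2) unfolding differentiable_on_eq_differentiable_at[OF assms(1)]
      by (auto intro: differentiable_chain_at[unfolded o_def] bounded_linear_imp_differentiable)
    fix v
    show "\<exists>D. Ck_on k S D \<and> (\<forall>x\<in>S. frechet_derivative (\<lambda>x. L (g x)) (at x) v = D x)"
    proof (intro exI conjI ballI)
      show "Ck_on k S (\<lambda>x. L (frechet_derivative g (at x) v))"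
        using Suc.IH Suc.prems by simp
      fix x assume "x \<in> S"
      then have "g differentiable at x"
        using dg differentiable_on_eq_differentiable_at[OF assms(1)] by auto
      then show "frechet_derivative (\<lambda>x. L (g x)) (at x) v = L (frechet_derivative g (at x) v)"
        using bounded_linear.has_derivative[OF assms(2)]
        by (intro frechet_derivative_apply) (auto simp: frechet_derivative_works)
    qed
  qed
qed

lemma linear_basis_expansion:
  fixes D :: "'a::euclidean_space \<Rightarrow> 'b::real_vector"
  assumes "linear D"
  shows "D w = (\<Sum>b\<in>Basis. (w \<bullet> b) *\<^sub>R D b)"
proof -
  have "D w = D (\<Sum>b\<in>Basis. (w \<bullet> b) *\<^sub>R b)"
    by (simp add: euclidean_representation)
  also have "\<dots> = (\<Sum>b\<in>Basis. (w \<bullet> b) *\<^sub>R D b)"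
    by (simp add: linear_sum[OF assms] linear_scale[OF assms])
  finally show ?thesis .
qed

lemma Ck_on_basis_combination:
  fixes X :: "'a::euclidean_space \<Rightarrow> 'b::euclidean_space"
  assumes "open S" "Ck_on k S X" "\<And>b. b \<in> Basis \<Longrightarrow> Ck_on k S (G b)"
  shows "Ck_on k S (\<lambda>x. \<Sum>b\<in>Basis. (X x \<bullet> b) *\<^sub>R G b x)"
  using assms
  by (intro Ck_on_sum Ck_on_scaleR Ck_on_bounded_linear[OF _ bounded_linear_inner_left]) simp_all

lemma Ck_on_frechet_derivative_apply:
  fixes g :: "'a::euclidean_space \<Rightarrow> 'c::real_normed_vector"
  assumes "open S" "Ck_on (Suc k) S g" "Ck_on k S X"
  shows "Ck_on k S (\<lambda>x. frechet_derivative g (at x) (X x))"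
proof (rule Ck_on_cong[OF assms(1)])
  show "Ck_on k S (\<lambda>x. \<Sum>b\<in>Basis. (X x \<bullet> b) *\<^sub>R frechet_derivative g (at x) b)"
    using assms by (intro Ck_on_basis_combination) simp_all
  fix x assume "x \<in> S"
  then have "g differentiable at x"
    using assms(2) differentiable_on_eq_differentiable_at[OF assms(1)] by auto
  then show "(\<Sum>b\<in>Basis. (X x \<bullet> b) *\<^sub>R frechet_derivative g (at x) b) = frechet_derivative g (at x) (X x)"
    by (simp add: linear_basis_expansion[symmetric] linear_frechet_derivative)
qed

lemma Ck_on_compose:
  fixes g :: "'a::euclidean_space \<Rightarrow> 'c::real_normed_vector" and c :: "'b::euclidean_space \<Rightarrow> 'a"
  assumes "open S" "open T" "c ` T \<subseteq> S"
  shows "Ck_on k S g \<Longrightarrow> Ck_on k T c \<Longrightarrow> Ck_on k T (\<lambda>t. g (c t))"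
proof (induction k arbitrary: g)
  case 0
  then show ?case using assms(3) by (simp add: continuous_on_compose2)
next
  case (Suc k)
  have "c differentiable_on T" "g differentiable_on S"
    using Suc.prems by simp_all
  then have dc: "c differentiable at t" and dg: "g differentiable at (c t)" if "t \<in> T" for t
    using that assms by (auto simp: differentiable_on_eq_differentiable_at)
  show ?case
  proof (rule Ck_on_SucI[OF assms(2)])
    show "(\<lambda>t. g (c t)) differentiable_on T"
      unfolding differentiable_on_eq_differentiable_at[OF assms(2)]
      using dc dg differentiable_chain_at[unfolded o_def] by blast
    fix v
    let ?w = "\<lambda>t. frechet_derivative c (at t) v"
    let ?D = "\<lambda>t. \<Sum>b\<in>Basis. (?w t \<bullet> b) *\<^sub>R frechet_derivative g (at (c t)) b"
    show "\<exists>D. Ck_on k T D \<and> (\<forall>t\<in>T. frechet_derivative (\<lambda>t. g (c t)) (at t) v = D t)"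
    proof (intro exI conjI ballI)
      have "Ck_on k T c"
        using Suc.prems(2) by (rule Ck_on_SucD)
      then show "Ck_on k T ?D"
        using Suc.prems by (intro Ck_on_basis_combination[OF assms(2)] Suc.IH) simp_all
      fix t assume "t \<in> T"
      then have "frechet_derivative (\<lambda>t. g (c t)) (at t) v = frechet_derivative g (at (c t)) (?w t)"
        using frechet_derivative_compose[OF dc dg] by (simp add: o_def)
      also have "\<dots> = ?D t"
        using dg[OF \<open>t \<in> T\<close>] by (intro linear_basis_expansion linear_frechet_derivative)
      finally show "frechet_derivative (\<lambda>t. g (c t)) (at t) v = ?D t" .
    qed
  qed
qed

section \<open>Derivatives along vector fields and curves\<close>

lemma vf_iter_0 [simp]: "vf_iter X 0 g = g"
  unfolding vf_iter_def by simp

lemma vf_iter_Suc: "vf_iter X (Suc k) g = vf_deriv X (vf_iter X k g)"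
  unfolding vf_iter_def by simp

lemma nderiv_0 [simp]: "nderiv 0 g = g"
  unfolding nderiv_def by simp

lemma nderiv_Suc: "nderiv (Suc k) g t = vector_derivative (nderiv k g) (at t)"
  unfolding nderiv_def by simp

lemma C_infty_on_vf_iter:
  assumes "open U" "C_infty_on U X" "C_infty_on U g"
  shows "C_infty_on U (vf_iter X j g)"
  unfolding C_infty_on_def
proof (induction j)
  case 0
  then show ?case using assms(3) by (simp add: C_infty_on_def)
next
  case (Suc j)
  show ?case
  proof
    fix k
    show "Ck_on k U (vf_iter X (Suc j) g)"
      unfolding vf_iter_Suc vf_deriv_def
      using Suc.IH assms(2) unfolding C_infty_on_def
      by (intro Ck_on_frechet_derivative_apply[OF assms(1)]) simp_all
  qed
qed

lemma vf_deriv_chain: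
  assumes "(c has_vector_derivative X (c t)) (at t)" "g differentiable at (c t)"
  shows "((\<lambda>t. g (c t)) has_vector_derivative vf_deriv X g (c t)) (at t)"
proof -
  have "(g has_derivative frechet_derivative g (at (c t))) (at (c t) within range c)"
    using assms(2) frechet_derivative_works has_derivative_at_withinI by blast
  from vector_derivative_diff_chain_within[OF assms(1) this]
  show ?thesis by (simp add: vf_deriv_def o_def)
qed

section \<open>Integral curves\<close>

lemma Ck_on_1_lipschitz_on:
  fixes g :: "'a::euclidean_space \<Rightarrow> 'b::real_normed_vector"
  assumes "open U" "Ck_on 1 U g" "K \<subseteq> U" "compact K" "convex K"
  obtains L where "L-lipschitz_on K g"
proof -
  let ?N = "\<lambda>x. \<Sum>b\<in>Basis. norm (frechet_derivative g (at x) b)"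
  have "continuous_on K ?N"
    using assms(2,3) by (auto intro!: continuous_intros intro: continuous_on_subset)
  then obtain B where "B \<ge> 0" and B: "\<And>x. x \<in> K \<Longrightarrow> norm (?N x) \<le> B"
    using continuous_on_compact_bound[OF assms(4)] by blast
  have deriv: "(g has_derivative frechet_derivative g (at x)) (at x)" if "x \<in> K" for x
    using that assms(1-3) frechet_derivative_works
    by (auto simp: differentiable_on_eq_differentiable_at)
  have "onorm (frechet_derivative g (at x)) \<le> B" if "x \<in> K" for x
    using onorm_componentwise[OF has_derivative_bounded_linear[OF deriv[OF that]]] B[OF that]
    by simp
  then have "norm (g x - g y) \<le> B * norm (x - y)" if "x \<in> K" "y \<in> K" for x y
    using differentiable_bound[OF assms(5) has_derivative_at_withinI[OF deriv]] that by blast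
  then have "B-lipschitz_on K g"
    using \<open>B \<ge> 0\<close> by (intro lipschitz_onI) (simp_all add: dist_norm)
  then show ?thesis by (rule that)
qed

lemma lipschitz_on_indefinite_integral:
  fixes g :: "real \<Rightarrow> 'a::banach"
  assumes "continuous_on {a..b} g" "\<And>s. s \<in> {a..b} \<Longrightarrow> norm (g s) \<le> K" "K \<ge> 0"
  shows "K-lipschitz_on {a..b} (\<lambda>u. integral {a..u} g)"
proof (rule lipschitz_onI)
  have combine: "integral {a..u} g - integral {a..v} g = integral {v..u} g"
    if "v \<le> u" "u \<in> {a..b}" "v \<in> {a..b}" for u v
  proof -
    have "g integrable_on {a..u}"
      using that assms(1) by (intro integrable_continuous_interval) (auto intro: continuous_on_subset)
    then have "integral {a..v} g + integral {v..u} g = integral {a..u} g"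
      using that by (intro Henstock_Kurzweil_Integration.integral_combine) auto
    then show ?thesis by (simp add: algebra_simps)
  qed
  have le: "norm (integral {a..u} g - integral {a..v} g) \<le> K * (u - v)"
    if "v \<le> u" "u \<in> {a..b}" "v \<in> {a..b}" for u v
    unfolding combine[OF that] using that assms
    by (intro integral_bound) (auto intro: continuous_on_subset)
  fix u v assume "u \<in> {a..b}" "v \<in> {a..b}"
  then show "dist (integral {a..u} g) (integral {a..v} g) \<le> K * dist u v"
    using le[of v u] le[of u v] by (cases "v \<le> u") (auto simp: dist_norm dist_real_def norm_minus_commute)
qed (rule assms(3))

locale picard_setting =
  fixes \<eta> :: "'a::banach \<Rightarrow> 'a" and p :: 'a and r M L h :: real
  assumes continuous: "continuous_on (cball p r) \<eta>"
    and bounded: "\<And>x. x \<in> cball p r \<Longrightarrow> norm (\<eta> x) \<le> M"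
    and lipschitz: "L-lipschitz_on (cball p r) \<eta>"
    and r_nonneg: "0 \<le> r" and h_pos: "0 < h"
    and h_M: "h * M \<le> r" and h_L: "h * L \<le> 1 / 2"
begin

(* Freezing the integral outside [-h, h] makes picard x a bounded continuous curve on the
   whole real line, so that Banach's fixed point theorem applies in the space of such curves. *)
definition clamp :: "real \<Rightarrow> real" where
  "clamp t = max (-h) (min h t)"

definition picard :: "(real \<Rightarrow>\<^sub>C 'a) \<Rightarrow> real \<Rightarrow> 'a" where
  "picard x t = p + (integral {-h..clamp t} (\<lambda>s. \<eta> (x s)) - integral {-h..0} (\<lambda>s. \<eta> (x s)))"

definition curves_in_cball :: "(real \<Rightarrow>\<^sub>C 'a) set" where
  "curves_in_cball = PiC UNIV (\<lambda>_. cball p r)"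

lemma clamp_mem: "clamp t \<in> {-h..h}"
  unfolding clamp_def using h_pos by auto

lemma clamp_id: "t \<in> {-h..h} \<Longrightarrow> clamp t = t"
  unfolding clamp_def by auto

lemma mem_curves_in_cball: "x \<in> curves_in_cball \<longleftrightarrow> (\<forall>t. x t \<in> cball p r)"
  unfolding curves_in_cball_def mem_PiC_iff Pi_def by simp

lemma continuous_on_field_along:
  "x \<in> curves_in_cball \<Longrightarrow> continuous_on {-h..h} (\<lambda>s. \<eta> (x s))"
  unfolding mem_curves_in_cball
  by (intro continuous_on_compose2[OF continuous continuous_on_apply_bcontfun]) auto

lemma norm_integral_clamp_le:
  assumes "K-lipschitz_on {-h..h} (\<lambda>u. integral {-h..u} g)"
  shows "norm (integral {-h..clamp t} g - integral {-h..0} g) \<le> h * K"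
proof -
  have "dist (integral {-h..clamp t} g) (integral {-h..0} g) \<le> K * dist (clamp t) 0"
    using lipschitz_onD[OF assms clamp_mem, of 0 t] h_pos by simp
  also have "\<dots> \<le> K * h"
    using clamp_mem[of t] lipschitz_on_nonneg[OF assms] by (intro mult_left_mono) auto
  finally show ?thesis by (simp add: dist_norm mult.commute)
qed

lemma picard_mem_cball:
  assumes "x \<in> curves_in_cball"
  shows "picard x t \<in> cball p r"
proof -
  have "M \<ge> 0"
    using bounded[of p] r_nonneg by (metis centre_in_cball norm_ge_zero order_trans)
  then have "M-lipschitz_on {-h..h} (\<lambda>u. integral {-h..u} (\<lambda>s. \<eta> (x s)))"
    using assms bounded unfolding mem_curves_in_cball
    by (intro lipschitz_on_indefinite_integral continuous_on_field_along[OF assms]) auto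
  then have "norm (picard x t - p) \<le> h * M"
    unfolding picard_def by (simp add: norm_integral_clamp_le)
  then show ?thesis
    using h_M by (simp add: dist_norm norm_minus_commute)
qed

lemma picard_bcontfun:
  assumes "x \<in> curves_in_cball"
  shows "picard x \<in> bcontfun"
proof (rule bcontfun_normI)
  have "continuous_on {-h..h} (\<lambda>u. integral {-h..u} (\<lambda>s. \<eta> (x s)))"
    using continuous_on_field_along[OF assms]
    by (intro indefinite_integral_continuous_1 integrable_continuous_interval)
  moreover have "continuous_on UNIV clamp"
    unfolding clamp_def by (intro continuous_intros)
  ultimately have "continuous_on UNIV (\<lambda>t. integral {-h..clamp t} (\<lambda>s. \<eta> (x s)))"
    using continuous_on_compose2 clamp_mem by blast
  then show "continuous_on UNIV (picard x)"
    unfolding picard_def by (intro continuous_on_add continuous_on_diff continuous_on_const)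
  fix t
  show "norm (picard x t) \<le> norm p + r"
    using picard_mem_cball[OF assms, of t] norm_triangle_sub[of "picard x t" p]
    by (simp add: dist_norm norm_minus_commute)
qed

lemma picard_contraction:
  assumes x: "x \<in> curves_in_cball" and y: "y \<in> curves_in_cball"
  shows "dist (picard x t) (picard y t) \<le> 1 / 2 * dist x y"
proof -
  let ?d = "\<lambda>s. \<eta> (x s) - \<eta> (y s)"
  have integral_d:
    "integral {-h..u} ?d = integral {-h..u} (\<lambda>s. \<eta> (x s)) - integral {-h..u} (\<lambda>s. \<eta> (y s))"
    if "u \<in> {-h..h}" for u
    using that continuous_on_field_along[OF x] continuous_on_field_along[OF y]
    by (intro integral_diff integrable_continuous_interval) (auto intro: continuous_on_subset)
  have L: "L \<ge> 0"
    using lipschitz by (rule lipschitz_on_nonneg)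
  have "norm (?d s) \<le> L * dist x y" for s
  proof -
    have "norm (?d s) \<le> L * dist (x s) (y s)"
      using lipschitz_onD[OF lipschitz] x y unfolding mem_curves_in_cball by (simp add: dist_norm)
    also have "\<dots> \<le> L * dist x y"
      using L dist_bounded[of x s y] by (rule mult_left_mono[rotated])
    finally show ?thesis .
  qed
  moreover have "continuous_on {-h..h} ?d"
    using continuous_on_field_along[OF x] continuous_on_field_along[OF y] by (rule continuous_on_diff)
  ultimately have "(L * dist x y)-lipschitz_on {-h..h} (\<lambda>u. integral {-h..u} ?d)"
    using L by (intro lipschitz_on_indefinite_integral) simp_all
  then have "norm (integral {-h..clamp t} ?d - integral {-h..0} ?d) \<le> h * (L * dist x y)"
    by (rule norm_integral_clamp_le)
  moreover have "picard x t - picard y t = integral {-h..clamp t} ?d - integral {-h..0} ?d"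
    unfolding picard_def using integral_d[OF clamp_mem] integral_d[of 0] h_pos by simp
  ultimately have "dist (picard x t) (picard y t) \<le> (h * L) * dist x y"
    by (simp add: dist_norm mult.assoc)
  also have "\<dots> \<le> 1 / 2 * dist x y"
    using h_L by (rule mult_right_mono) simp
  finally show ?thesis .
qed

lemma picard_integral_curve:
  obtains c where "c 0 = p" "\<And>t. c t \<in> cball p r"
    "\<And>t. t \<in> {-h<..<h} \<Longrightarrow> (c has_vector_derivative \<eta> (c t)) (at t)"
proof -
  define T where "T x = Bcontfun (picard x)" for x
  have apply_T: "apply_bcontfun (T x) = picard x" if "x \<in> curves_in_cball" for x
    unfolding T_def using picard_bcontfun[OF that] by (simp add: Bcontfun_inverse)
  have complete: "complete curves_in_cball"
    unfolding complete_eq_closed curves_in_cball_def by (rule closed_PiC) simp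
  have nonempty: "curves_in_cball \<noteq> {}"
    using r_nonneg unfolding mem_curves_in_cball ex_in_conv[symmetric]
    by (metis centre_in_cball const_bcontfun.rep_eq)
  have maps_to: "T ` curves_in_cball \<subseteq> curves_in_cball"
    using apply_T picard_mem_cball by (auto simp: mem_curves_in_cball)
  have contraction: "dist (T x) (T y) \<le> 1 / 2 * dist x y"
    if "x \<in> curves_in_cball" "y \<in> curves_in_cball" for x y
    using picard_contraction[OF that] by (intro dist_bound) (simp add: apply_T that)
  have "\<exists>!x\<in>curves_in_cball. T x = x"
    by (rule Banach_fix[OF complete nonempty _ _ maps_to contraction]) simp_all
  then obtain x where x: "x \<in> curves_in_cball" "T x = x"
    by blast
  let ?g = "\<lambda>s. \<eta> (x s)"
  (* oriented towards x t: the other way round it would loop, x occurring in ?g *)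
  have fixed: "p + (integral {-h..clamp t} ?g - integral {-h..0} ?g) = x t" for t
    using apply_T[OF x(1)] x(2) unfolding picard_def by (metis fun_cong)
  show ?thesis
  proof (rule that[of "apply_bcontfun x"])
    show "x 0 = p"
      using fixed[of 0] clamp_id[of 0] h_pos by simp
    show "x t \<in> cball p r" for t
      using x(1) by (simp add: mem_curves_in_cball)
    fix t :: real assume t: "t \<in> {-h<..<h}"
    have "((\<lambda>u. integral {-h..u} ?g) has_vector_derivative ?g t) (at t within {-h..h})"
      using t by (intro integral_has_vector_derivative continuous_on_field_along[OF x(1)]) auto
    then have "((\<lambda>u. integral {-h..u} ?g) has_vector_derivative ?g t) (at t)"
      using t at_within_interior[of t "{-h..h}"] by simp
    then have "((\<lambda>u. p + (integral {-h..u} ?g - integral {-h..0} ?g)) has_vector_derivative ?g t) (at t)"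
      using has_vector_derivative_add[OF has_vector_derivative_const
          has_vector_derivative_diff[OF _ has_vector_derivative_const]] by fastforce
    then show "(x has_vector_derivative \<eta> (x t)) (at t)"
    proof (rule has_vector_derivative_transform_within_open[OF _ open_greaterThanLessThan t])
      fix u assume "u \<in> {-h<..<h}"
      then show "p + (integral {-h..u} ?g - integral {-h..0} ?g) = x u"
        using fixed[of u] clamp_id[of u] by simp
    qed
  qed
qed

end

lemma integral_curve_exists:
  fixes \<eta> :: "'a::euclidean_space \<Rightarrow> 'a"
  assumes "open U" "Ck_on 1 U \<eta>" "p \<in> U"
  obtains h c where "h > 0" "c 0 = p" "c ` {-h<..<h} \<subseteq> U"
    "\<And>t. t \<in> {-h<..<h} \<Longrightarrow> (c has_vector_derivative \<eta> (c t)) (at t)"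
proof -
  obtain r where r: "r > 0" "cball p r \<subseteq> U"
    using assms(1,3) open_contains_cball by blast
  have "Ck_on 0 (cball p r) \<eta>"
    using Ck_on_subset[OF Ck_on_le[OF zero_le_one assms(2)] r(2)] .
  then have continuous: "continuous_on (cball p r) \<eta>"
    by simp
  then obtain M where M: "M \<ge> 0" "\<And>x. x \<in> cball p r \<Longrightarrow> norm (\<eta> x) \<le> M"
    by (rule continuous_on_compact_bound[OF compact_cball]) blast
  obtain L where L: "L-lipschitz_on (cball p r) \<eta>"
    using Ck_on_1_lipschitz_on[OF assms(1,2) r(2) compact_cball convex_cball] .
  define h where "h = min (r / (M + 1)) (1 / (2 * (L + 1)))"
  have L0: "L \<ge> 0"
    using L by (rule lipschitz_on_nonneg)
  have h: "h > 0" "h \<le> r / (M + 1)" "h \<le> 1 / (2 * (L + 1))"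
    unfolding h_def using r M(1) L0 by simp_all
  then have "h * (M + 1) \<le> r" "h * (2 * (L + 1)) \<le> 1"
    using M(1) L0 by (simp_all add: pos_le_divide_eq)
  then interpret picard_setting \<eta> p r M L h
    using continuous M L r h(1) by unfold_locales (auto simp: algebra_simps)
  obtain c where "c 0 = p" "\<And>t. c t \<in> cball p r"
    "\<And>t. t \<in> {-h<..<h} \<Longrightarrow> (c has_vector_derivative \<eta> (c t)) (at t)"
    using picard_integral_curve by blast
  with h(1) r(2) show ?thesis
    using that by blast
qed

lemma C_infty_on_integral_curve:
  fixes \<eta> :: "'a::euclidean_space \<Rightarrow> 'a" and c :: "real \<Rightarrow> 'a"
  assumes "open U" "C_infty_on U \<eta>" "open I" "c ` I \<subseteq> U"
    and curve: "\<And>t. t \<in> I \<Longrightarrow> (c has_vector_derivative \<eta> (c t)) (at t)"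
  shows "C_infty_on I c"
  unfolding C_infty_on_def
proof
  have diff: "c differentiable_on I"
    using curve unfolding differentiable_on_eq_differentiable_at[OF assms(3)]
    by (auto simp: has_vector_derivative_def differentiable_def)
  have deriv: "frechet_derivative c (at t) v = v *\<^sub>R \<eta> (c t)" if "t \<in> I" for t v
    using curve[OF that] by (simp add: has_vector_derivative_def frechet_derivative_apply)
  fix k
  show "Ck_on k I c"
  proof (induction k)
    case 0
    then show ?case using diff by (simp add: differentiable_imp_continuous_on)
  next
    case (Suc k)
    have "Ck_on k I (\<lambda>t. \<eta> (c t))"
      using assms(2) Suc.IH unfolding C_infty_on_def by (blast intro: Ck_on_compose[OF assms(1,3,4)])
    then have "Ck_on k I (\<lambda>t. v *\<^sub>R \<eta> (c t))" for v
      by (rule Ck_on_scaleR[OF assms(3) Ck_on_const])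
    then show ?case
      using deriv by (blast intro: Ck_on_SucI[OF assms(3) diff])
  qed
qed

lemma nderiv_comp_integral_curve:
  fixes \<eta> :: "real \<times> real \<Rightarrow> real \<times> real" and g :: "real \<times> real \<Rightarrow> 'b::real_normed_vector"
  assumes "open U" "C_infty_on U \<eta>" "C_infty_on U g" "open I" "c ` I \<subseteq> U"
    and curve: "\<And>t. t \<in> I \<Longrightarrow> (c has_vector_derivative \<eta> (c t)) (at t)"
  shows "t \<in> I \<Longrightarrow> nderiv j (g \<circ> c) t = vf_iter \<eta> j g (c t)"
proof (induction j arbitrary: t)
  case 0
  then show ?case by simp
next
  case (Suc j)
  have "Ck_on 1 U (vf_iter \<eta> j g)"
    using C_infty_on_vf_iter[OF assms(1-3)] unfolding C_infty_on_def by blast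
  then have "vf_iter \<eta> j g differentiable at (c t)"
    using Suc.prems assms(1,5) by (auto simp: differentiable_on_eq_differentiable_at)
  then have "((\<lambda>t. vf_iter \<eta> j g (c t)) has_vector_derivative vf_iter \<eta> (Suc j) g (c t)) (at t)"
    using vf_deriv_chain[of c \<eta>, OF curve[OF Suc.prems]] by (simp add: vf_iter_Suc)
  then have "(nderiv j (g \<circ> c) has_vector_derivative vf_iter \<eta> (Suc j) g (c t)) (at t)"
    by (rule has_vector_derivative_transform_within_open[OF _ assms(4) Suc.prems]) (simp add: Suc.IH)
  then show ?case
    unfolding nderiv_Suc by (rule vector_derivative_at)
qed

lemma regular_integral_curve_exists:
  fixes \<eta> :: "'a::euclidean_space \<Rightarrow> 'a"
  assumes "open U" "C_infty_on U \<eta>" "p \<in> U" "\<eta> p \<noteq> 0"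
  obtains h c where "h > 0" "c 0 = p" "c ` {-h<..<h} \<subseteq> U" "C_infty_on {-h<..<h} c"
    "\<And>t. t \<in> {-h<..<h} \<Longrightarrow> (c has_vector_derivative \<eta> (c t)) (at t)"
    "\<And>t. t \<in> {-h<..<h} \<Longrightarrow> vector_derivative c (at t) \<noteq> 0"
proof -
  define V where "V = U \<inter> \<eta> -` (- {0})"
  have "continuous_on U \<eta>"
    using assms(2) unfolding C_infty_on_def by (metis Ck_on.simps(1))
  then have V: "open V" "V \<subseteq> U" "p \<in> V"
    unfolding V_def using assms by (auto intro: continuous_open_preimage)
  have "Ck_on 1 V \<eta>"
    using assms(2) V(2) Ck_on_subset unfolding C_infty_on_def by blast
  then obtain h c where h: "h > 0" "c 0 = p" and cV: "c ` {-h<..<h} \<subseteq> V"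
    and curve: "\<And>t. t \<in> {-h<..<h} \<Longrightarrow> (c has_vector_derivative \<eta> (c t)) (at t)"
    using integral_curve_exists[OF V(1) _ V(3)] by blast
  have cU: "c ` {-h<..<h} \<subseteq> U"
    using cV V(2) by blast
  have regular: "vector_derivative c (at t) \<noteq> 0" if "t \<in> {-h<..<h}" for t
  proof -
    have "c t \<in> V"
      using cV that by blast
    then show ?thesis
      using vector_derivative_at[OF curve[OF that]] by (simp add: V_def)
  qed
  have smooth: "C_infty_on {-h<..<h} c"
    using assms(1,2) open_greaterThanLessThan cU curve by (rule C_infty_on_integral_curve)
  from h cU smooth curve regular show ?thesis
    by (rule that)
qed

theorem lemma3p5:
  fixes U :: "(real \<times> real) set" and f n :: "real \<times> real \<Rightarrow> real^3"
    and p :: "real \<times> real" and \<gamma> :: "real \<Rightarrow> real \<times> real" and \<delta> :: real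
    and \<xi> \<eta> :: "real \<times> real \<Rightarrow> real \<times> real"
  assumes frontal: "frontal_with U f n"
    and pU: "p \<in> U"
    and nondeg: "nondegenerate_singular_pt f n p"
    and \<delta>pos: "\<delta> > 0"
    and \<gamma>smooth: "C_infty_on {-\<delta><..<\<delta>} \<gamma>"
    and \<gamma>U: "\<gamma> ` {-\<delta><..<\<delta>} \<subseteq> U"
    and \<gamma>reg: "\<forall>t\<in>{-\<delta><..<\<delta>}. vector_derivative \<gamma> (at t) \<noteq> 0"
    and \<gamma>0: "\<gamma> 0 = p"
    and \<gamma>sing: "\<forall>t\<in>{-\<delta><..<\<delta>}. singular_pt f (\<gamma> t)"
    and \<gamma>all: "\<exists>W. open W \<and> p \<in> W \<and> {x \<in> U \<inter> W. singular_pt f x} \<subseteq> \<gamma> ` {-\<delta><..<\<delta>}"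
    and \<xi>smooth: "C_infty_on U \<xi>" and \<eta>smooth: "C_infty_on U \<eta>"
    and \<xi>\<gamma>: "\<forall>t\<in>{-\<delta><..<\<delta>}. \<xi> (\<gamma> t) = vector_derivative \<gamma> (at t)"
    and \<eta>null: "\<forall>t\<in>{-\<delta><..<\<delta>}. frechet_derivative f (at (\<gamma> t)) (\<eta> (\<gamma> t)) = 0"
    and detpos: "\<forall>t\<in>{-\<delta><..<\<delta>}. det2 (\<xi> (\<gamma> t)) (\<eta> (\<gamma> t)) > 0"
    and a: "vf_iter \<eta> 3 f p = 0"
    and b: "lin_indep2 (vf_deriv \<xi> f p) (vf_iter \<eta> 2 f p)"
    and c_dep: "\<not> lin_indep2 (vf_deriv \<xi> (vf_iter \<eta> 3 f) p) (vf_iter \<eta> 2 f p)"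
  shows "\<exists>\<epsilon> > 0. \<exists>c :: real \<Rightarrow> real \<times> real. \<exists>l :: real.
           C_infty_on {-\<epsilon><..<\<epsilon>} c \<and> c ` {-\<epsilon><..<\<epsilon>} \<subseteq> U \<and>
           (\<forall>t\<in>{-\<epsilon><..<\<epsilon>}. vector_derivative c (at t) \<noteq> 0) \<and>
           c 0 = p \<and>
           (\<exists>k. vector_derivative c (at 0) = k *\<^sub>R \<eta> p) \<and>
           nderiv 2 (f \<circ> c) 0 \<noteq> 0 \<and>
           nderiv 3 (f \<circ> c) 0 = l *\<^sub>R nderiv 2 (f \<circ> c) 0 \<and>
           det3 (frechet_derivative f (at p) (vector_derivative \<gamma> (at 0)))
                (nderiv 2 (f \<circ> c) 0)
                (3 *\<^sub>R nderiv 5 (f \<circ> c) 0 - (10 * l) *\<^sub>R nderiv 4 (f \<circ> c) 0)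
             = 3 * det3 (vf_deriv \<xi> f p) (vf_iter \<eta> 2 f p) (vf_iter \<eta> 5 f p)"
proof -
  have U: "open U" and f: "C_infty_on U f"
    using frontal unfolding frontal_with_def by auto
  have t0: "0 \<in> {-\<delta><..<\<delta>}"
    using \<delta>pos by simp
  have "\<eta> p \<noteq> 0"
    using detpos t0 \<gamma>0 by (force simp: det2_def)
  then obtain h c where h: "h > 0" and c0: "c 0 = p" and cU: "c ` {-h<..<h} \<subseteq> U"
    and smooth: "C_infty_on {-h<..<h} c"
    and curve: "\<And>t. t \<in> {-h<..<h} \<Longrightarrow> (c has_vector_derivative \<eta> (c t)) (at t)"
    and regular: "\<And>t. t \<in> {-h<..<h} \<Longrightarrow> vector_derivative c (at t) \<noteq> 0"
    using regular_integral_curve_exists[OF U \<eta>smooth pU] by blast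
  have jets: "nderiv j (f \<circ> c) 0 = vf_iter \<eta> j f p" for j
    using nderiv_comp_integral_curve[OF U \<eta>smooth f _ cU curve, of 0 j] h c0 by simp
  have velocity: "\<exists>k. vector_derivative c (at 0) = k *\<^sub>R \<eta> p"
    using vector_derivative_at[OF curve] h c0 by (intro exI[of _ 1]) simp
  have df_\<gamma>: "frechet_derivative f (at p) (vector_derivative \<gamma> (at 0)) = vf_deriv \<xi> f p"
    using \<xi>\<gamma> t0 \<gamma>0 unfolding vf_deriv_def by metis
  show ?thesis
    by (rule exI[of _ h], rule conjI[OF h], rule exI[of _ c], rule exI[of _ 0])
      (use df_\<gamma> c0 cU smooth regular jets velocity a lin_indep2_imp_nonzero_right[OF b] in
       \<open>auto simp: det3_scaleR_right\<close>)
qed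

end
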